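(* Let $X,Y$ be real Hilbert spaces and $I$ either $[0,T]$ ($T>0$) or $[0,+\infty)$. Assume: $K\subset X$ is a nonempty closed convex cone; $A:X\to X$ satisfies $(Au-Av,u-v)_X\ge m_A\|u-v\|_X^2$ and $\|Au-Av\|_X\le L_A\|u-v\|_X$ for all $u,v\in X$, with $m_A,L_A>0$; $j:Y\times K\to\mathbb{R}$ is such that $j(\eta,\cdot)$ is convex, positively homogeneous and Lipschitz continuous on $K$ for every $\eta\in Y$, and there is $\alpha_j\ge0$ with $j(\eta_1,v_2)-j(\eta_1,v_1)+j(\eta_2,v_1)-j(\eta_2,v_2)\le\alpha_j\|\eta_1-\eta_2\|_Y\|v_1-v_2\|_X$ for all $\eta_i\in Y$, $v_i\in K$; $f\in C(I;X)$; $B:X\to X$ is Lipschitz continuous; $u_0\in X$; and $\mathcal{R}:C(I;X)\to C(I;Y)$, $\mathcal{S}:C(I;X)\to C(I;X)$ are history-dependent operators. Then there exists a unique function $u:I\to X$ with $u\in C^1(I;X)$ and $\dot u\in C(I;K)$ such that $$-\dot u(t)\in \mathrm{N}_{C(\mathcal{R}\dot u(t),t)}\big(A\dot u(t)+Bu(t)+\mathcal{S}\dot u(t)\big)\quad\forall\,t\in I,\qquad u(0)=u_0.$$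
   Context: An operator $\mathcal{P}:C(I;Z_1)\to C(I;Z_2)$ is history-dependent if for every compact $\mathcal J\subset I$ there is $L_{\mathcal J}>0$ with $\|\mathcal{P}u_1(t)-\mathcal{P}u_2(t)\|_{Z_2}\le L_{\mathcal J}\int_0^t\|u_1(s)-u_2(s)\|_{Z_1}ds$ for all $u_1,u_2\in C(I;Z_1)$, $t\in\mathcal J$. Define $J(\eta,v)=j(\eta,v)$ for $v\in K$, $J(\eta,v)=+\infty$ for $v\notin K$; $C(\eta)=\{\xi\in X: J(\eta,v)\ge(\xi,v)_X\ \forall v\in X\}$; $C(\eta,t)=f(t)-C(\eta)$. For a nonempty closed convex $D\subset X$, $\mathrm{N}_D(x)=\{\xi:(\xi,w-x)_X\le0\ \forall w\in D\}$ if $x\in D$, $\emptyset$ otherwise. *)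

theory Defs
  imports "HOL-Analysis.Analysis"
begin

text \<open>History-dependent operator P from C(I;Z1) to C(I;Z2) (functions are total on real;
  only their values on I matter).\<close>
definition history_dependent :: "real set \<Rightarrow> ((real \<Rightarrow> 'a::real_normed_vector) \<Rightarrow> (real \<Rightarrow> 'b::real_normed_vector)) \<Rightarrow> bool" where
  "history_dependent I P \<longleftrightarrow>
     (\<forall>u. continuous_on I u \<longrightarrow> continuous_on I (P u)) \<and>
     (\<forall>J. compact J \<and> J \<subseteq> I \<longrightarrow>
        (\<exists>L>0. \<forall>u1 u2. continuous_on I u1 \<and> continuous_on I u2 \<longrightarrow>
           (\<forall>t\<in>J. norm (P u1 t - P u2 t) \<le> L * integral {0..t} (\<lambda>s. norm (u1 s - u2 s)))))"

definition Jfun :: "'x set \<Rightarrow> ('y \<Rightarrow> 'x \<Rightarrow> real) \<Rightarrow> 'y \<Rightarrow> 'x \<Rightarrow> ereal" where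
  "Jfun K j \<eta> v = (if v \<in> K then ereal (j \<eta> v) else \<infinity>)"

definition Cset :: "'x::real_inner set \<Rightarrow> ('y \<Rightarrow> 'x \<Rightarrow> real) \<Rightarrow> 'y \<Rightarrow> 'x set" where
  "Cset K j \<eta> = {\<xi>. \<forall>v. Jfun K j \<eta> v \<ge> ereal (inner \<xi> v)}"

definition Cset_t :: "'x::real_inner set \<Rightarrow> ('y \<Rightarrow> 'x \<Rightarrow> real) \<Rightarrow> (real \<Rightarrow> 'x) \<Rightarrow> 'y \<Rightarrow> real \<Rightarrow> 'x set" where
  "Cset_t K j f \<eta> t = {f t - \<xi> | \<xi>. \<xi> \<in> Cset K j \<eta>}"

definition normal_cone :: "'x::real_inner set \<Rightarrow> 'x \<Rightarrow> 'x set" where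
  "normal_cone D x = (if x \<in> D then {\<xi>. \<forall>w\<in>D. inner \<xi> (w - x) \<le> 0} else {})"

end

(*
  For fixed data (eta, g) the inclusion at time t says that w = u'(t) solves the elliptic
  variational inequality: w in K and (A w - g, v - w) + j(eta, v) - j(eta, w) >= 0 for all
  v in K.  Indeed, j(eta, .) is sublinear on the cone K, so C(eta) is the set of its supporting
  functionals, and -w is normal to f - C(eta) at A w + b exactly when f - b - A w is a
  subgradient of j(eta, .) at w.  The inequality has a unique solution vi_sol eta g, obtained
  from Banach's fixed point theorem and the proximal map of j(eta, .), and this solution is
  Lipschitz in (eta, g) with constant (1 + alpha_j) / m_A.

  Writing u = u0 + int_0^t u', the problem becomes the fixed point equation u' = Lambda u',
  where Lambda w t = vi_sol (R w t) (f t - B (u0 + int_0^t w) - S w t) is again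
  history-dependent.  In the sup norm weighted by exp(-beta t) a history-dependent operator is
  a contraction on every [0, T] once beta is twice its history constant, so it has a unique
  continuous fixed point on [0, T]; on [0, oo) these fixed points agree where they overlap.
*)
theory Submission
  imports Defs
begin

section \<open>Elliptic variational inequalities\<close>

definition solves_vi :: "'a::real_inner set \<Rightarrow> ('a \<Rightarrow> 'a) \<Rightarrow> ('a \<Rightarrow> real) \<Rightarrow> 'a \<Rightarrow> 'a \<Rightarrow> bool" where
  "solves_vi K A \<phi> g w \<longleftrightarrow> w \<in> K \<and> (\<forall>v\<in>K. 0 \<le> inner (A w - g) (v - w) + \<phi> v - \<phi> w)"

lemma solves_vi_stability:
  fixes A :: "'a::real_inner \<Rightarrow> 'a"
  assumes A: "mA > 0" "\<And>u v. mA * (norm (u - v))\<^sup>2 \<le> inner (A u - A v) (u - v)"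
    and w1: "solves_vi K A \<phi>1 g1 w1" and w2: "solves_vi K A \<phi>2 g2 w2"
    and E: "E \<ge> 0" "\<phi>1 w2 - \<phi>1 w1 + \<phi>2 w1 - \<phi>2 w2 \<le> E * norm (w1 - w2)"
  shows "mA * norm (w1 - w2) \<le> norm (g1 - g2) + E"
proof -
  have "0 \<le> inner (A w1 - g1) (w2 - w1) + \<phi>1 w2 - \<phi>1 w1"
    "0 \<le> inner (A w2 - g2) (w1 - w2) + \<phi>2 w1 - \<phi>2 w2"
    using w1 w2 by (auto simp: solves_vi_def)
  then have "inner (A w1 - A w2) (w1 - w2)
      \<le> inner (g1 - g2) (w1 - w2) + (\<phi>1 w2 - \<phi>1 w1 + \<phi>2 w1 - \<phi>2 w2)"
    by (simp add: inner_diff_left inner_diff_right inner_commute algebra_simps)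
  also have "\<dots> \<le> (norm (g1 - g2) + E) * norm (w1 - w2)"
    using E(2) Cauchy_Schwarz_ineq2[of "g1 - g2" "w1 - w2"] by (simp add: algebra_simps)
  finally have "(mA * norm (w1 - w2)) * norm (w1 - w2) \<le> (norm (g1 - g2) + E) * norm (w1 - w2)"
    using A(2)[of w1 w2] by (simp add: power2_eq_square mult.assoc)
  then show ?thesis
    using E(1) by (cases "w1 = w2") (auto simp: mult_le_cancel_right)
qed

lemma solves_vi_id_nonexpansive:
  assumes "solves_vi K id \<phi> z1 p1" "solves_vi K id \<phi> z2 p2"
  shows "norm (p1 - p2) \<le> norm (z1 - z2)"
  using solves_vi_stability[OF _ _ assms, of 1 0] by (simp add: power2_norm_eq_inner)

lemma norm_midpoint_diff_power2:
  fixes x y z :: "'a::real_inner"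
  shows "(norm ((1/2) *\<^sub>R x + (1/2) *\<^sub>R y - z))\<^sup>2
    = (norm (x - z))\<^sup>2 / 2 + (norm (y - z))\<^sup>2 / 2 - (norm (x - y))\<^sup>2 / 4"
proof -
  have "(1/2) *\<^sub>R x + (1/2) *\<^sub>R y - z = (1/2) *\<^sub>R ((x - z) + (y - z))" "x - y = (x - z) - (y - z)"
    by (simp_all add: algebra_simps flip: scaleR_add_left)
  then show ?thesis
    by (simp add: power2_norm_eq_inner inner_add_left inner_add_right inner_diff_left
        inner_diff_right inner_commute field_simps)
qed

lemma strongly_midconvex_minimizing_Cauchy:
  fixes F :: "'a::real_normed_vector \<Rightarrow> real"
  assumes K: "convex K" and a: "\<And>n. a n \<in> K" "\<And>n. F (a n) < m + inverse (real (Suc n))"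
    and m: "\<And>v. v \<in> K \<Longrightarrow> m \<le> F v"
    and mid: "\<And>x y. x \<in> K \<Longrightarrow> y \<in> K \<Longrightarrow>
      (norm (x - y))\<^sup>2 / 8 + F ((1/2) *\<^sub>R x + (1/2) *\<^sub>R y) \<le> (F x + F y) / 2"
  shows "Cauchy a"
proof (rule metric_CauchyI)
  have a_close: "(norm (a n - a k))\<^sup>2 < 8 * inverse (real (Suc N))" if "n \<ge> N" "k \<ge> N" for n k N
  proof -
    have "m \<le> F ((1/2) *\<^sub>R a n + (1/2) *\<^sub>R a k)"
      using K a(1) by (intro m convexD) auto
    moreover have "inverse (real (Suc n)) \<le> inverse (real (Suc N))"
      "inverse (real (Suc k)) \<le> inverse (real (Suc N))"
      using that by (simp_all add: field_simps)
    ultimately show ?thesis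
      using mid[OF a(1) a(1), of n k] a(2)[of n] a(2)[of k] by argo
  qed
  fix e :: real assume e: "0 < e"
  obtain N :: nat where N: "8 / e\<^sup>2 < real (Suc N)"
    using reals_Archimedean2 by (metis less_Suc_eq of_nat_less_iff order.strict_trans)
  have "dist (a n) (a k) < e" if "n \<ge> N" "k \<ge> N" for n k
  proof -
    have "8 * inverse (real (Suc N)) < e\<^sup>2"
      using N e by (simp add: field_simps)
    then have "(norm (a n - a k))\<^sup>2 < e\<^sup>2"
      using a_close[OF that] by linarith
    then show ?thesis
      using e by (simp add: dist_norm power_less_imp_less_base)
  qed
  then show "\<exists>M. \<forall>n\<ge>M. \<forall>k\<ge>M. dist (a n) (a k) < e" by blast
qed

lemma strongly_midconvex_attains_min:
  fixes F :: "'a::{real_normed_vector,complete_space} \<Rightarrow> real"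
  assumes K: "K \<noteq> {}" "closed K" "convex K"
    and F: "continuous_on K F" "bdd_below (F ` K)"
    and mid: "\<And>x y. x \<in> K \<Longrightarrow> y \<in> K \<Longrightarrow>
      (norm (x - y))\<^sup>2 / 8 + F ((1/2) *\<^sub>R x + (1/2) *\<^sub>R y) \<le> (F x + F y) / 2"
  shows "\<exists>p\<in>K. \<forall>v\<in>K. F p \<le> F v"
proof -
  define m where "m = Inf (F ` K)"
  have m_le: "m \<le> F v" if "v \<in> K" for v
    unfolding m_def using F(2) that by (auto intro: cInf_lower)
  have "\<exists>a\<in>K. F a < m + inverse (real (Suc n))" for n
    using cInf_lessD[of "F ` K" "m + inverse (real (Suc n))"] K(1) by (auto simp: m_def)
  then obtain a where a: "\<And>n. a n \<in> K" "\<And>n. F (a n) < m + inverse (real (Suc n))"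
    by metis
  then have "Cauchy a"
    using strongly_midconvex_minimizing_Cauchy[OF K(3) _ _ m_le mid] by blast
  then obtain p where p: "a \<longlonglongrightarrow> p"
    using Cauchy_convergent_iff convergent_def by blast
  have pK: "p \<in> K"
    using closed_sequentially[OF K(2) a(1) p] .
  have "(\<lambda>n. F (a n)) \<longlonglongrightarrow> F p"
    using continuous_on_tendsto_compose[OF F(1) p pK] a(1) by simp
  moreover have "(\<lambda>n. m + inverse (real (Suc n))) \<longlonglongrightarrow> m"
    using tendsto_add[OF tendsto_const LIMSEQ_inverse_real_of_nat, of m] by simp
  ultimately have "F p \<le> m"
    using a(2) by (intro LIMSEQ_le) (auto intro: less_imp_le)
  then show ?thesis
    using pK m_le by force
qed

lemma quadratic_min_solves_vi:
  fixes \<phi> :: "'a::real_inner \<Rightarrow> real"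
  assumes K: "convex K" and \<phi>: "convex_on K \<phi>" and p: "p \<in> K"
    and min: "\<And>v. v \<in> K \<Longrightarrow> \<phi> p + (norm (p - z))\<^sup>2 / 2 \<le> \<phi> v + (norm (v - z))\<^sup>2 / 2"
  shows "solves_vi K id \<phi> z p"
  unfolding solves_vi_def id_def
proof (intro conjI p ballI)
  fix v assume v: "v \<in> K"
  define Q where "Q = inner (p - z) (v - p) + \<phi> v - \<phi> p"
  define c where "c = (norm (v - p))\<^sup>2 / 2"
  have "0 \<le> Q + s * c" if s: "0 < s" "s < 1" for s
  proof -
    define q where "q = (1 - s) *\<^sub>R p + s *\<^sub>R v"
    have "\<phi> q \<le> (1 - s) * \<phi> p + s * \<phi> v"
      unfolding q_def using convex_onD[OF \<phi>, of s p v] s p v by auto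
    moreover have "\<phi> p + (norm (p - z))\<^sup>2 / 2 \<le> \<phi> q + (norm (q - z))\<^sup>2 / 2"
      unfolding q_def using K p v s by (intro min convexD) auto
    moreover have "(norm (q - z))\<^sup>2
        = (norm (p - z))\<^sup>2 + 2 * s * inner (p - z) (v - p) + s\<^sup>2 * (norm (v - p))\<^sup>2"
    proof -
      have q: "q - z = (p - z) + s *\<^sub>R (v - p)"
        by (simp add: q_def algebra_simps)
      show ?thesis
        unfolding q power2_norm_eq_inner
        by (simp add: inner_add_left inner_add_right inner_diff_left
            inner_diff_right inner_commute power2_eq_square algebra_simps)
    qed
    ultimately have "0 \<le> s * (Q + s * c)"
      unfolding Q_def c_def by (simp add: algebra_simps power2_eq_square)
    then show ?thesis
      using s by (simp add: zero_le_mult_iff)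
  qed
  then have "eventually (\<lambda>s. 0 \<le> Q + s * c) (at_right 0)"
    by (intro eventually_at_rightI[of 0 1]) auto
  moreover have "((\<lambda>s. Q + s * c) \<longlongrightarrow> Q) (at_right 0)"
    by (auto intro!: tendsto_eq_intros)
  ultimately have "0 \<le> Q"
    by (intro tendsto_lowerbound[of "\<lambda>s. Q + s * c"]) auto
  then show "0 \<le> inner (p - z) (v - p) + \<phi> v - \<phi> p"
    by (simp add: Q_def)
qed

lemma solves_vi_id_exists:
  fixes K :: "'a::{real_inner,complete_space} set"
  assumes K: "K \<noteq> {}" "closed K" "convex K" and \<phi>: "convex_on K \<phi>" "L-lipschitz_on K \<phi>"
  shows "\<exists>p. solves_vi K id \<phi> z p"
proof -
  define F where "F v = \<phi> v + (norm (v - z))\<^sup>2 / 2" for v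
  obtain k where k: "k \<in> K" using K(1) by auto
  have L: "L \<ge> 0" using \<phi>(2) by (rule lipschitz_on_nonneg)
  have "\<phi> k - L * norm (z - k) - L\<^sup>2 / 2 \<le> F v" if v: "v \<in> K" for v
  proof -
    have "\<phi> k - \<phi> v \<le> L * norm (v - k)"
      using lipschitz_onD[OF \<phi>(2) v k] by (simp add: dist_norm dist_real_def)
    moreover have "L * norm (v - k) \<le> L * norm (v - z) + L * norm (z - k)"
      using L norm_triangle_ineq[of "v - z" "z - k"] by (simp flip: distrib_left add: mult_left_mono)
    moreover have "0 \<le> (norm (v - z) - L)\<^sup>2 / 2" by simp
    ultimately show ?thesis
      unfolding F_def by (simp add: power2_diff algebra_simps)
  qed
  then have "bdd_below (F ` K)" by (auto intro!: bdd_belowI2)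
  moreover have "continuous_on K F"
    unfolding F_def by (intro continuous_intros lipschitz_on_continuous_on[OF \<phi>(2)]) auto
  moreover have "(norm (x - y))\<^sup>2 / 8 + F ((1/2) *\<^sub>R x + (1/2) *\<^sub>R y) \<le> (F x + F y) / 2"
    if "x \<in> K" "y \<in> K" for x y
  proof -
    have "\<phi> ((1/2) *\<^sub>R x + (1/2) *\<^sub>R y) \<le> \<phi> x / 2 + \<phi> y / 2"
      using convex_onD[OF \<phi>(1), of "1/2" x y] that by simp
    then show ?thesis
      unfolding F_def norm_midpoint_diff_power2 by argo
  qed
  ultimately obtain p where "p \<in> K" "\<And>v. v \<in> K \<Longrightarrow> F p \<le> F v"
    using strongly_midconvex_attains_min[OF K] by blast
  then show ?thesis
    using quadratic_min_solves_vi[OF K(3) \<phi>(1)] unfolding F_def by blast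
qed

lemma solves_vi_id_dist_le:
  assumes p: "solves_vi K id \<phi> z p" and z: "z \<in> K" and \<phi>: "L-lipschitz_on K \<phi>"
  shows "norm (z - p) \<le> L"
proof -
  have pK: "p \<in> K" and "0 \<le> inner (p - z) (z - p) + \<phi> z - \<phi> p"
    using p z by (auto simp: solves_vi_def)
  moreover have "inner (p - z) (z - p) = - (norm (z - p))\<^sup>2"
    by (metis inner_minus_left minus_diff_eq power2_norm_eq_inner)
  ultimately have "norm (z - p) * norm (z - p) \<le> \<phi> z - \<phi> p"
    by (simp add: power2_eq_square)
  also have "\<dots> \<le> L * norm (z - p)"
    using lipschitz_onD[OF \<phi> z pK] by (simp add: dist_norm dist_real_def)
  finally show ?thesis
    using lipschitz_on_nonneg[OF \<phi>] by (cases "z = p") (auto simp: mult_le_cancel_right)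
qed

lemma gradient_step_contraction:
  fixes A :: "'a::real_inner \<Rightarrow> 'a"
  assumes mono: "mA * (norm (x - y))\<^sup>2 \<le> inner (A x - A y) (x - y)"
    and lip: "norm (A x - A y) \<le> LA * norm (x - y)" and \<rho>: "0 \<le> \<rho>"
  shows "norm ((x - \<rho> *\<^sub>R A x) - (y - \<rho> *\<^sub>R A y))
    \<le> sqrt (max 0 (1 - 2 * \<rho> * mA + \<rho>\<^sup>2 * LA\<^sup>2)) * norm (x - y)"
proof (rule power2_le_imp_le)
  define d a where "d = x - y" and "a = A x - A y"
  have step: "(x - \<rho> *\<^sub>R A x) - (y - \<rho> *\<^sub>R A y) = d - \<rho> *\<^sub>R a"
    by (simp add: d_def a_def algebra_simps)
  have "(norm ((x - \<rho> *\<^sub>R A x) - (y - \<rho> *\<^sub>R A y)))\<^sup>2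
      = (norm d)\<^sup>2 - 2 * \<rho> * inner a d + \<rho>\<^sup>2 * (norm a)\<^sup>2"
    unfolding step power2_norm_eq_inner
    by (simp add: inner_diff_left inner_diff_right inner_commute power2_eq_square algebra_simps)
  moreover have "2 * \<rho> * (mA * (norm d)\<^sup>2) \<le> 2 * \<rho> * inner a d"
    using mult_left_mono[OF mono, of "2 * \<rho>"] \<rho> by (simp add: d_def a_def mult.assoc)
  moreover have "\<rho>\<^sup>2 * (norm a)\<^sup>2 \<le> \<rho>\<^sup>2 * (LA * norm d)\<^sup>2"
    using lip by (intro mult_left_mono power_mono) (simp_all add: d_def a_def)
  ultimately have "(norm ((x - \<rho> *\<^sub>R A x) - (y - \<rho> *\<^sub>R A y)))\<^sup>2
      \<le> (1 - 2 * \<rho> * mA + \<rho>\<^sup>2 * LA\<^sup>2) * (norm (x - y))\<^sup>2"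
    unfolding d_def by (simp add: algebra_simps power_mult_distrib)
  also have "\<dots> \<le> (sqrt (max 0 (1 - 2 * \<rho> * mA + \<rho>\<^sup>2 * LA\<^sup>2)) * norm (x - y))\<^sup>2"
    by (auto simp: power_mult_distrib intro: mult_right_mono)
  finally show "(norm ((x - \<rho> *\<^sub>R A x) - (y - \<rho> *\<^sub>R A y)))\<^sup>2
      \<le> (sqrt (max 0 (1 - 2 * \<rho> * mA + \<rho>\<^sup>2 * LA\<^sup>2)) * norm (x - y))\<^sup>2" .
qed simp

text \<open>The solution is the fixed point of the contraction \<open>w \<mapsto> prox (w - \<rho> (A w - g))\<close>
  with \<open>\<rho> = mA / LA\<^sup>2\<close>, where \<open>prox z\<close> solves the inequality with operator \<open>id\<close>,
  functional \<open>\<rho> \<phi>\<close> and datum \<open>z\<close>.\<close>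

lemma solves_vi_exists:
  fixes K :: "'a::{real_inner,complete_space} set" and A :: "'a \<Rightarrow> 'a"
  assumes K: "K \<noteq> {}" "closed K" "convex K" and \<phi>: "convex_on K \<phi>" "L-lipschitz_on K \<phi>"
    and A: "mA > 0" "LA > 0"
      "\<And>u v. mA * (norm (u - v))\<^sup>2 \<le> inner (A u - A v) (u - v)"
      "\<And>u v. norm (A u - A v) \<le> LA * norm (u - v)"
  shows "\<exists>w. solves_vi K A \<phi> g w"
proof -
  define \<rho> where "\<rho> = mA / LA\<^sup>2"
  have \<rho>: "\<rho> > 0" using A(1,2) by (simp add: \<rho>_def)
  have \<rho>\<phi>: "convex_on K (\<lambda>v. \<rho> * \<phi> v)" "(\<rho> * L)-lipschitz_on K (\<lambda>v. \<rho> * \<phi> v)"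
    using \<rho> \<phi> by (auto intro: convex_on_cmul lipschitz_on_cmult_real_nonneg)
  define P where "P z = (SOME p. solves_vi K id (\<lambda>v. \<rho> * \<phi> v) z p)" for z
  have P: "solves_vi K id (\<lambda>v. \<rho> * \<phi> v) z (P z)" for z
    unfolding P_def by (rule someI_ex[OF solves_vi_id_exists[OF K \<rho>\<phi>]])
  define c where "c = sqrt (max 0 (1 - 2 * \<rho> * mA + \<rho>\<^sup>2 * LA\<^sup>2))"
  have "1 - 2 * \<rho> * mA + \<rho>\<^sup>2 * LA\<^sup>2 = 1 - \<rho> * mA"
    using A(2) by (simp add: \<rho>_def power2_eq_square field_simps)
  then have c: "0 \<le> c" "c < 1"
    using \<rho> A(1) by (auto simp: c_def)
  define T where "T w = P (w - \<rho> *\<^sub>R (A w - g))" for w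
  have "dist (T x) (T y) \<le> c * dist x y" for x y
  proof -
    have "(x - \<rho> *\<^sub>R (A x - g)) - (y - \<rho> *\<^sub>R (A y - g)) = (x - \<rho> *\<^sub>R A x) - (y - \<rho> *\<^sub>R A y)"
      by (simp add: algebra_simps)
    then have "norm (T x - T y) \<le> norm ((x - \<rho> *\<^sub>R A x) - (y - \<rho> *\<^sub>R A y))"
      unfolding T_def by (metis P solves_vi_id_nonexpansive)
    also have "\<dots> \<le> c * norm (x - y)"
      unfolding c_def using A(3,4) \<rho> by (intro gradient_step_contraction) auto
    finally show ?thesis by (simp add: dist_norm)
  qed
  moreover have "T ` K \<subseteq> K"
    using P by (auto simp: T_def solves_vi_def)
  ultimately obtain w where w: "w \<in> K" "T w = w"
    using Banach_fix[OF complete_eq_closed[THEN iffD2, OF K(2)] K(1) c] by blast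
  have "0 \<le> \<rho> * (inner (A w - g) (v - w) + \<phi> v - \<phi> w)" if "v \<in> K" for v
    using P[of "w - \<rho> *\<^sub>R (A w - g)"] w(2) that
    by (simp add: T_def solves_vi_def algebra_simps)
  then show ?thesis
    using \<rho> w(1) by (auto simp: solves_vi_def zero_le_mult_iff)
qed

section \<open>Sublinear functionals and the set \<open>C(\<eta>)\<close>\<close>

lemma sublinear_subgradient_iff:
  fixes \<phi> :: "'a::real_inner \<Rightarrow> real"
  assumes K: "cone K" and hom: "\<And>c v. c > 0 \<Longrightarrow> v \<in> K \<Longrightarrow> \<phi> (c *\<^sub>R v) = c * \<phi> v"
    and p: "p \<in> K"
  shows "(\<forall>v\<in>K. inner g (v - p) \<le> \<phi> v - \<phi> p) \<longleftrightarrow> (\<forall>v\<in>K. inner g v \<le> \<phi> v) \<and> inner g p = \<phi> p"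
proof
  assume sub: "\<forall>v\<in>K. inner g (v - p) \<le> \<phi> v - \<phi> p"
  have "0 \<in> K" using K p cone_contains_0 by blast
  moreover have "\<phi> 0 = 0"
    using hom[of 2 0] \<open>0 \<in> K\<close> by simp
  ultimately have "\<phi> p \<le> inner g p"
    using sub by (force simp: inner_diff_right)
  moreover have "inner g p \<le> \<phi> p"
  proof -
    have "2 *\<^sub>R p \<in> K" using K p by (simp add: cone_def)
    then have "inner g (2 *\<^sub>R p - p) \<le> \<phi> (2 *\<^sub>R p) - \<phi> p" using sub by blast
    then show ?thesis using hom[of 2 p] p by (simp add: algebra_simps)
  qed
  ultimately show "(\<forall>v\<in>K. inner g v \<le> \<phi> v) \<and> inner g p = \<phi> p"
    using sub by (force simp: inner_diff_right)
qed (simp add: inner_diff_right)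

text \<open>The witness is \<open>(w - p) / \<mu>\<close> for the proximal point \<open>p\<close> of \<open>\<mu> \<phi>\<close> at \<open>w\<close>: it is a
  subgradient of \<open>\<phi>\<close> at \<open>p\<close>, hence a supporting functional, and \<open>norm (w - p) \<le> \<mu> L\<close>.\<close>

lemma sublinear_support_approx:
  fixes K :: "'a::{real_inner,complete_space} set"
  assumes K: "closed K" "convex K" "cone K" and w: "w \<in> K"
    and \<phi>: "convex_on K \<phi>" "L-lipschitz_on K \<phi>"
    and hom: "\<And>c v. c > 0 \<Longrightarrow> v \<in> K \<Longrightarrow> \<phi> (c *\<^sub>R v) = c * \<phi> v" and \<epsilon>: "\<epsilon> > 0"
  shows "\<exists>g. (\<forall>v\<in>K. inner g v \<le> \<phi> v) \<and> \<phi> w - \<epsilon> \<le> inner g w"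
proof -
  have L: "L \<ge> 0" using \<phi>(2) by (rule lipschitz_on_nonneg)
  define \<mu> where "\<mu> = \<epsilon> / (L\<^sup>2 + 1)"
  have "L\<^sup>2 + 1 > 0" by (simp add: add_nonneg_pos)
  then have \<mu>: "\<mu> > 0" "\<mu> * L\<^sup>2 \<le> \<epsilon>"
    using \<epsilon> by (auto simp: \<mu>_def field_simps)
  have \<mu>\<phi>: "convex_on K (\<lambda>v. \<mu> * \<phi> v)" "(\<mu> * L)-lipschitz_on K (\<lambda>v. \<mu> * \<phi> v)"
    using \<mu> \<phi> by (auto intro: convex_on_cmul lipschitz_on_cmult_real_nonneg)
  obtain p where p: "solves_vi K id (\<lambda>v. \<mu> * \<phi> v) w p"
    using solves_vi_id_exists[OF _ K(1,2) \<mu>\<phi>] w by blast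
  define g where "g = (1 / \<mu>) *\<^sub>R (w - p)"
  have pK: "p \<in> K" using p by (simp add: solves_vi_def)
  have "inner g (v - p) \<le> \<phi> v - \<phi> p" if "v \<in> K" for v
  proof -
    have "\<mu> * inner g (v - p) \<le> \<mu> * (\<phi> v - \<phi> p)"
      using p that \<mu>(1) by (simp add: g_def solves_vi_def inner_diff_left algebra_simps)
    then show ?thesis using \<mu>(1) by simp
  qed
  then have g: "\<forall>v\<in>K. inner g v \<le> \<phi> v" "inner g p = \<phi> p"
    using sublinear_subgradient_iff[OF K(3) hom pK] by blast+
  have "\<phi> w - \<phi> p \<le> L * norm (w - p)"
    using lipschitz_onD[OF \<phi>(2) w pK] by (simp add: dist_norm dist_real_def abs_le_iff)
  also have "\<dots> \<le> L * (\<mu> * L)"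
    using solves_vi_id_dist_le[OF p w \<mu>\<phi>(2)] L by (rule mult_left_mono)
  also have "\<dots> \<le> \<epsilon>"
    using \<mu>(2) by (simp add: power2_eq_square mult_ac)
  finally have "\<phi> w - \<epsilon> \<le> \<phi> p" by simp
  moreover have "inner g w = inner g p + (norm (w - p))\<^sup>2 / \<mu>"
    by (simp add: g_def power2_norm_eq_inner inner_diff_right diff_divide_distrib)
  moreover have "0 \<le> (norm (w - p))\<^sup>2 / \<mu>"
    using \<mu>(1) by simp
  ultimately show ?thesis
    using g by (intro exI[of _ g]) auto
qed

lemma mem_Cset_iff: "\<xi> \<in> Cset K j \<eta> \<longleftrightarrow> (\<forall>v\<in>K. inner \<xi> v \<le> j \<eta> v)"
  by (auto simp: Cset_def Jfun_def)

lemma normal_cone_Cset_iff: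
  fixes K :: "'a::{real_inner,complete_space} set"
  assumes K: "closed K" "convex K" "cone K" and w: "w \<in> K"
    and j: "convex_on K (j \<eta>)" "L-lipschitz_on K (j \<eta>)"
    and hom: "\<And>c v. c > 0 \<Longrightarrow> v \<in> K \<Longrightarrow> j \<eta> (c *\<^sub>R v) = c * j \<eta> v"
  shows "w \<in> normal_cone (Cset K j \<eta>) \<xi> \<longleftrightarrow> (\<forall>v\<in>K. inner \<xi> (v - w) \<le> j \<eta> v - j \<eta> w)"
proof
  assume "w \<in> normal_cone (Cset K j \<eta>) \<xi>"
  then have \<xi>: "\<xi> \<in> Cset K j \<eta>" and max: "\<And>\<zeta>. \<zeta> \<in> Cset K j \<eta> \<Longrightarrow> inner \<zeta> w \<le> inner \<xi> w"
    by (auto simp: normal_cone_def inner_diff_right inner_commute split: if_splits)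
  have "j \<eta> w \<le> inner \<xi> w"
  proof (rule field_le_epsilon)
    fix \<epsilon> :: real assume "\<epsilon> > 0"
    then obtain \<zeta> where "\<zeta> \<in> Cset K j \<eta>" "j \<eta> w - \<epsilon> \<le> inner \<zeta> w"
      using sublinear_support_approx[OF K w j hom] by (auto simp: mem_Cset_iff)
    then show "j \<eta> w \<le> inner \<xi> w + \<epsilon>"
      using max by fastforce
  qed
  moreover have "inner \<xi> w \<le> j \<eta> w" and "\<forall>v\<in>K. inner \<xi> v \<le> j \<eta> v"
    using \<xi> w by (auto simp: mem_Cset_iff)
  ultimately show "\<forall>v\<in>K. inner \<xi> (v - w) \<le> j \<eta> v - j \<eta> w"
    using sublinear_subgradient_iff[OF K(3) hom w, of \<xi>] by auto
next
  assume "\<forall>v\<in>K. inner \<xi> (v - w) \<le> j \<eta> v - j \<eta> w"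
  then have "\<forall>v\<in>K. inner \<xi> v \<le> j \<eta> v" "inner \<xi> w = j \<eta> w"
    using sublinear_subgradient_iff[OF K(3) hom w, of \<xi>] by auto
  then show "w \<in> normal_cone (Cset K j \<eta>) \<xi>"
    by (auto simp: normal_cone_def mem_Cset_iff inner_diff_right inner_commute w)
qed

lemma normal_cone_reflect:
  fixes C :: "'a::real_inner set"
  shows "- w \<in> normal_cone {F - \<xi> | \<xi>. \<xi> \<in> C} (F - x) \<longleftrightarrow> w \<in> normal_cone C x"
  by (auto simp: normal_cone_def inner_diff_right)

section \<open>Integrals of functions with values in a Hilbert space\<close>

text \<open>The integration library is stated for the class \<open>banach\<close>, which a type of sort
  \<open>{real_inner, complete_space}\<close> does not belong to; integrals are therefore taken in an
  isomorphic copy of the space that is registered as a Banach space.\<close>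

typedef ('a::"{real_normed_vector,complete_space}") banach_copy = "UNIV :: 'a set"
  by simp

declare Abs_banach_copy_inverse[simplified, simp] Rep_banach_copy_inverse[simp]

instantiation banach_copy :: ("{real_normed_vector,complete_space}") real_vector
begin
definition "0 = Abs_banach_copy 0"
definition "x + y = Abs_banach_copy (Rep_banach_copy x + Rep_banach_copy y)"
definition "x - y = Abs_banach_copy (Rep_banach_copy x - Rep_banach_copy y)"
definition "- x = Abs_banach_copy (- Rep_banach_copy x)"
definition "c *\<^sub>R x = Abs_banach_copy (c *\<^sub>R Rep_banach_copy x)"
instance
  by standard (simp_all add: zero_banach_copy_def plus_banach_copy_def minus_banach_copy_def
      uminus_banach_copy_def scaleR_banach_copy_def algebra_simps flip: Rep_banach_copy_inject)
end

lemma Rep_banach_copy_linear [simp]: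
  "Rep_banach_copy (x + y) = Rep_banach_copy x + Rep_banach_copy y"
  "Rep_banach_copy (x - y) = Rep_banach_copy x - Rep_banach_copy y"
  "Rep_banach_copy (c *\<^sub>R x) = c *\<^sub>R Rep_banach_copy x"
  by (simp_all add: plus_banach_copy_def minus_banach_copy_def scaleR_banach_copy_def)

instantiation banach_copy :: ("{real_normed_vector,complete_space}") real_normed_vector
begin
definition "norm x = norm (Rep_banach_copy x)"
definition "sgn (x :: 'a banach_copy) = x /\<^sub>R norm x"
definition "dist (x :: 'a banach_copy) y = norm (x - y)"
definition "(uniformity :: ('a banach_copy \<times> 'a banach_copy) filter)
  = (INF e\<in>{0 <..}. principal {(x, y). dist x y < e})"
definition "open (U :: 'a banach_copy set)
  \<longleftrightarrow> (\<forall>x\<in>U. eventually (\<lambda>(x', y). x' = x \<longrightarrow> y \<in> U) uniformity)"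
instance
proof
  fix x y :: "'a banach_copy" and c :: real
  show "norm x = 0 \<longleftrightarrow> x = 0"
    by (simp add: norm_banach_copy_def zero_banach_copy_def flip: Rep_banach_copy_inject)
  show "norm (x + y) \<le> norm x + norm y"
    by (simp add: norm_banach_copy_def norm_triangle_ineq)
  show "norm (c *\<^sub>R x) = \<bar>c\<bar> * norm x"
    by (simp add: norm_banach_copy_def)
qed (simp_all add: sgn_banach_copy_def dist_banach_copy_def uniformity_banach_copy_def
    open_banach_copy_def)
end

lemma dist_Rep_banach_copy: "dist (Rep_banach_copy x) (Rep_banach_copy y) = dist x y"
  by (simp add: dist_norm norm_banach_copy_def)

instance banach_copy :: ("{real_normed_vector,complete_space}") banach
proof
  fix X :: "nat \<Rightarrow> 'a banach_copy" assume "Cauchy X"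
  then have "Cauchy (\<lambda>n. Rep_banach_copy (X n))"
    by (simp add: Cauchy_def dist_Rep_banach_copy)
  then obtain l where "(\<lambda>n. Rep_banach_copy (X n)) \<longlonglongrightarrow> l"
    using Cauchy_convergent_iff convergent_def by blast
  then have "X \<longlonglongrightarrow> Abs_banach_copy l"
    using dist_Rep_banach_copy[of "X _" "Abs_banach_copy l"] by (simp add: lim_sequentially)
  then show "convergent X" by (auto simp: convergent_def)
qed

lemma Abs_banach_copy_diff: "Abs_banach_copy (x - y) = Abs_banach_copy x - Abs_banach_copy y"
  by (simp flip: Rep_banach_copy_inject)

lemma bounded_linear_Rep_banach_copy: "bounded_linear Rep_banach_copy"
  by (rule bounded_linear_intro[where K = 1]) (simp_all add: norm_banach_copy_def)

lemma bounded_linear_Abs_banach_copy: "bounded_linear Abs_banach_copy"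
  by (rule bounded_linear_intro[where K = 1])
    (simp_all add: norm_banach_copy_def flip: Rep_banach_copy_inject)

definition vintegral :: "real set \<Rightarrow> (real \<Rightarrow> 'a::{real_normed_vector,complete_space}) \<Rightarrow> 'a" where
  "vintegral S w = Rep_banach_copy (integral S (\<lambda>s. Abs_banach_copy (w s)))"

lemma continuous_on_Abs_banach_copy:
  "continuous_on S w \<Longrightarrow> continuous_on S (\<lambda>s. Abs_banach_copy (w s))"
  by (rule bounded_linear.continuous_on[OF bounded_linear_Abs_banach_copy])

lemma has_vector_derivative_vintegral:
  assumes "continuous_on {a..b} w" "x \<in> {a..b}"
  shows "((\<lambda>u. vintegral {a..u} w) has_vector_derivative w x) (at x within {a..b})"
  using bounded_linear.has_vector_derivative[OF bounded_linear_Rep_banach_copy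
      integral_has_vector_derivative[OF continuous_on_Abs_banach_copy[OF assms(1)] assms(2)]]
  by (simp add: vintegral_def)

lemma vintegral_fundamental:
  assumes "a \<le> b" "\<And>x. x \<in> {a..b} \<Longrightarrow> (v has_vector_derivative v' x) (at x within {a..b})"
  shows "vintegral {a..b} v' = v b - v a"
proof -
  have "((\<lambda>x. Abs_banach_copy (v' x)) has_integral Abs_banach_copy (v b) - Abs_banach_copy (v a)) {a..b}"
    using assms
    by (intro fundamental_theorem_of_calculus bounded_linear.has_vector_derivative[OF bounded_linear_Abs_banach_copy])
  then show ?thesis
    by (simp add: vintegral_def integral_unique)
qed

lemma norm_vintegral_diff_le:
  assumes "continuous_on {a..b} w1" "continuous_on {a..b} w2"
  shows "norm (vintegral {a..b} w1 - vintegral {a..b} w2) \<le> integral {a..b} (\<lambda>s. norm (w1 s - w2 s))"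
proof -
  have "(\<lambda>s. Abs_banach_copy (w1 s)) integrable_on {a..b}" "(\<lambda>s. Abs_banach_copy (w2 s)) integrable_on {a..b}"
    using assms by (simp_all add: integrable_continuous_interval continuous_on_Abs_banach_copy)
  then have "vintegral {a..b} w1 - vintegral {a..b} w2
      = Rep_banach_copy (integral {a..b} (\<lambda>s. Abs_banach_copy (w1 s) - Abs_banach_copy (w2 s)))"
    by (simp add: vintegral_def integral_diff)
  also have "\<dots> = Rep_banach_copy (integral {a..b} (\<lambda>s. Abs_banach_copy (w1 s - w2 s)))"
    by (simp add: Abs_banach_copy_diff)
  also have "norm \<dots> \<le> integral {a..b} (\<lambda>s. norm (w1 s - w2 s))"
    unfolding norm_banach_copy_def[symmetric] using assms
    by (intro integral_norm_bound_integral integrable_continuous_interval continuous_intros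
        continuous_on_Abs_banach_copy) (simp_all add: norm_banach_copy_def)
  finally show ?thesis .
qed

lemma vintegral_cong: "(\<And>s. s \<in> S \<Longrightarrow> w1 s = w2 s) \<Longrightarrow> vintegral S w1 = vintegral S w2"
  unfolding vintegral_def by (metis (mono_tags, lifting) integral_cong)

lemma vintegral_singleton [simp]: "vintegral {a} w = 0"
  by (simp add: vintegral_def zero_banach_copy_def)

definition time_interval :: "real set \<Rightarrow> bool" where
  "time_interval I \<longleftrightarrow> (\<exists>T\<ge>0. I = {0..T}) \<or> I = {0..}"

lemma time_interval_subset: "time_interval I \<Longrightarrow> t \<in> I \<Longrightarrow> {0..t} \<subseteq> I"
  by (auto simp: time_interval_def)

lemma time_interval_nonneg: "time_interval I \<Longrightarrow> t \<in> I \<Longrightarrow> 0 \<le> t"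
  by (auto simp: time_interval_def)

lemma time_interval_at_within:
  assumes "time_interval I" "t \<in> I"
  obtains b where "t \<in> {0..b}" "{0..b} \<subseteq> I" "at t within I = at t within {0..b}"
  using assms unfolding time_interval_def
proof (elim disjE exE conjE)
  assume "I = {0..}"
  moreover have "at t within {0..} = at t within {0..t + 1}"
    by (rule at_within_nhd[of _ "{..<t + 1}"]) auto
  ultimately show thesis
    using that[of "t + 1"] assms(2) by auto
qed (use that in auto)

lemma has_vector_derivative_vintegral_time_interval:
  assumes "time_interval I" "continuous_on I w" "t \<in> I"
  shows "((\<lambda>u. vintegral {0..u} w) has_vector_derivative w t) (at t within I)"
proof -
  obtain b where b: "t \<in> {0..b}" "{0..b} \<subseteq> I" "at t within I = at t within {0..b}"
    using time_interval_at_within[OF assms(1,3)] .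
  show ?thesis
    unfolding b(3) using continuous_on_subset[OF assms(2) b(2)] b(1)
    by (rule has_vector_derivative_vintegral)
qed

lemma time_interval_fundamental:
  assumes I: "time_interval I" and t: "t \<in> I"
    and v: "\<And>s. s \<in> I \<Longrightarrow> (v has_vector_derivative v' s) (at s within I)"
  shows "v t = v 0 + vintegral {0..t} v'"
proof -
  have "vintegral {0..t} v' = v t - v 0"
    using time_interval_nonneg[OF I t] time_interval_subset[OF I t]
    by (intro vintegral_fundamental has_vector_derivative_within_subset[OF v]) auto
  then show ?thesis by simp
qed

section \<open>History-dependent operators\<close>

lemma history_dependentD:
  assumes "history_dependent I P" "compact J" "J \<subseteq> I"
  obtains L where "L > 0"
    "\<And>w1 w2 t. continuous_on I w1 \<Longrightarrow> continuous_on I w2 \<Longrightarrow> t \<in> J \<Longrightarrow>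
       norm (P w1 t - P w2 t) \<le> L * integral {0..t} (\<lambda>s. norm (w1 s - w2 s))"
  using assms unfolding history_dependent_def by meson

lemma history_dependent_continuous:
  "history_dependent I P \<Longrightarrow> continuous_on I w \<Longrightarrow> continuous_on I (P w)"
  unfolding history_dependent_def by blast

lemma history_dependentI:
  assumes cont: "\<And>w. continuous_on I w \<Longrightarrow> continuous_on I (P w)"
    and bound: "\<And>J. compact J \<Longrightarrow> J \<subseteq> I \<Longrightarrow> \<exists>L\<ge>0. \<forall>w1 w2 t.
      continuous_on I w1 \<longrightarrow> continuous_on I w2 \<longrightarrow> t \<in> J \<longrightarrow>
      norm (P w1 t - P w2 t) \<le> L * integral {0..t} (\<lambda>s. norm (w1 s - w2 s))"
  shows "history_dependent I P"
  unfolding history_dependent_def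
proof (intro conjI allI impI cont)
  fix J assume "compact J \<and> J \<subseteq> I"
  then obtain L where L: "L \<ge> 0" and est: "\<forall>w1 w2 t. continuous_on I w1 \<longrightarrow> continuous_on I w2
      \<longrightarrow> t \<in> J \<longrightarrow> norm (P w1 t - P w2 t) \<le> L * integral {0..t} (\<lambda>s. norm (w1 s - w2 s))"
    using bound by blast
  have "norm (P w1 t - P w2 t) \<le> (L + 1) * integral {0..t} (\<lambda>s. norm (w1 s - w2 s))"
    if "continuous_on I w1" "continuous_on I w2" "t \<in> J" for w1 w2 t
  proof -
    have "0 \<le> integral {0..t} (\<lambda>s. norm (w1 s - w2 s))"
      by (cases "(\<lambda>s. norm (w1 s - w2 s)) integrable_on {0..t}")
        (simp_all add: integral_nonneg not_integrable_integral)
    then have "L * integral {0..t} (\<lambda>s. norm (w1 s - w2 s))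
        \<le> (L + 1) * integral {0..t} (\<lambda>s. norm (w1 s - w2 s))"
      by (simp add: mult_right_mono)
    with est that show ?thesis by force
  qed
  with L show "\<exists>L>0. \<forall>u1 u2. continuous_on I u1 \<and> continuous_on I u2 \<longrightarrow>
      (\<forall>t\<in>J. norm (P u1 t - P u2 t) \<le> L * integral {0..t} (\<lambda>s. norm (u1 s - u2 s)))"
    by (intro exI[of _ "L + 1"]) auto
qed

lemma history_dependent_causal:
  assumes P: "history_dependent I P" and w: "continuous_on I w1" "continuous_on I w2"
    and t: "t \<in> I" and eq: "\<And>s. s \<in> {0..t} \<Longrightarrow> w1 s = w2 s"
  shows "P w1 t = P w2 t"
proof -
  obtain L where L: "\<And>w1 w2 t'. continuous_on I w1 \<Longrightarrow> continuous_on I w2 \<Longrightarrow> t' \<in> {t} \<Longrightarrow>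
      norm (P w1 t' - P w2 t') \<le> L * integral {0..t'} (\<lambda>s. norm (w1 s - w2 s))"
    using history_dependentD[OF P compact_sing, of t] t by (metis empty_subsetI insert_subset)
  have "norm (P w1 t - P w2 t) \<le> L * integral {0..t} (\<lambda>s. norm (w1 s - w2 s))"
    using L[OF w] by simp
  moreover have "integral {0..t} (\<lambda>s. norm (w1 s - w2 s)) = 0"
    using integral_cong[of "{0..t}" "\<lambda>s. norm (w1 s - w2 s)" "\<lambda>s. 0"] eq by simp
  ultimately show ?thesis by simp
qed

lemma history_dependent_const: "continuous_on I f \<Longrightarrow> history_dependent I (\<lambda>w. f)"
  by (rule history_dependentI) (auto intro!: exI[of _ 0])

lemma history_dependent_diff:
  assumes P: "history_dependent I P" and Q: "history_dependent I Q"
  shows "history_dependent I (\<lambda>w t. P w t - Q w t)"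
proof (rule history_dependentI)
  show "continuous_on I (\<lambda>t. P w t - Q w t)" if "continuous_on I w" for w
    using history_dependent_continuous[OF P that] history_dependent_continuous[OF Q that]
    by (rule continuous_on_diff)
  fix J assume J: "compact J" "J \<subseteq> I"
  obtain LP where LP: "LP > 0" "\<And>w1 w2 t. continuous_on I w1 \<Longrightarrow> continuous_on I w2 \<Longrightarrow> t \<in> J \<Longrightarrow>
      norm (P w1 t - P w2 t) \<le> LP * integral {0..t} (\<lambda>s. norm (w1 s - w2 s))"
    using history_dependentD[OF P J] by blast
  obtain LQ where LQ: "LQ > 0" "\<And>w1 w2 t. continuous_on I w1 \<Longrightarrow> continuous_on I w2 \<Longrightarrow> t \<in> J \<Longrightarrow>
      norm (Q w1 t - Q w2 t) \<le> LQ * integral {0..t} (\<lambda>s. norm (w1 s - w2 s))"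
    using history_dependentD[OF Q J] by blast
  have "norm ((P w1 t - Q w1 t) - (P w2 t - Q w2 t))
      \<le> (LP + LQ) * integral {0..t} (\<lambda>s. norm (w1 s - w2 s))"
    if "continuous_on I w1" "continuous_on I w2" "t \<in> J" for w1 w2 t
  proof -
    have "norm ((P w1 t - Q w1 t) - (P w2 t - Q w2 t)) \<le> norm (P w1 t - P w2 t) + norm (Q w1 t - Q w2 t)"
      using norm_triangle_ineq4[of "P w1 t - P w2 t" "Q w1 t - Q w2 t"] by (simp add: algebra_simps)
    then show ?thesis
      using LP(2)[OF that] LQ(2)[OF that] by (simp add: distrib_right)
  qed
  with LP(1) LQ(1) show "\<exists>L\<ge>0. \<forall>w1 w2 t. continuous_on I w1 \<longrightarrow> continuous_on I w2 \<longrightarrow> t \<in> J \<longrightarrow>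
      norm ((P w1 t - Q w1 t) - (P w2 t - Q w2 t)) \<le> L * integral {0..t} (\<lambda>s. norm (w1 s - w2 s))"
    by (intro exI[of _ "LP + LQ"]) auto
qed

lemma history_dependent_Pair:
  assumes P: "history_dependent I P" and Q: "history_dependent I Q"
  shows "history_dependent I (\<lambda>w t. (P w t, Q w t))"
proof (rule history_dependentI)
  show "continuous_on I (\<lambda>t. (P w t, Q w t))" if "continuous_on I w" for w
    using history_dependent_continuous[OF P that] history_dependent_continuous[OF Q that]
    by (rule continuous_on_Pair)
  fix J assume J: "compact J" "J \<subseteq> I"
  obtain LP where LP: "LP > 0" "\<And>w1 w2 t. continuous_on I w1 \<Longrightarrow> continuous_on I w2 \<Longrightarrow> t \<in> J \<Longrightarrow>
      norm (P w1 t - P w2 t) \<le> LP * integral {0..t} (\<lambda>s. norm (w1 s - w2 s))"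
    using history_dependentD[OF P J] by blast
  obtain LQ where LQ: "LQ > 0" "\<And>w1 w2 t. continuous_on I w1 \<Longrightarrow> continuous_on I w2 \<Longrightarrow> t \<in> J \<Longrightarrow>
      norm (Q w1 t - Q w2 t) \<le> LQ * integral {0..t} (\<lambda>s. norm (w1 s - w2 s))"
    using history_dependentD[OF Q J] by blast
  have "norm ((P w1 t, Q w1 t) - (P w2 t, Q w2 t))
      \<le> (LP + LQ) * integral {0..t} (\<lambda>s. norm (w1 s - w2 s))"
    if "continuous_on I w1" "continuous_on I w2" "t \<in> J" for w1 w2 t
    using norm_Pair_le[of "P w1 t - P w2 t" "Q w1 t - Q w2 t"] LP(2)[OF that] LQ(2)[OF that]
    by (simp add: distrib_right)
  with LP(1) LQ(1) show "\<exists>L\<ge>0. \<forall>w1 w2 t. continuous_on I w1 \<longrightarrow> continuous_on I w2 \<longrightarrow> t \<in> J \<longrightarrow>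
      norm ((P w1 t, Q w1 t) - (P w2 t, Q w2 t)) \<le> L * integral {0..t} (\<lambda>s. norm (w1 s - w2 s))"
    by (intro exI[of _ "LP + LQ"]) auto
qed

lemma history_dependent_lipschitz_compose:
  assumes G: "L-lipschitz_on UNIV G" and P: "history_dependent I P"
  shows "history_dependent I (\<lambda>w t. G (P w t))"
proof (rule history_dependentI)
  show "continuous_on I (\<lambda>t. G (P w t))" if "continuous_on I w" for w
    using continuous_on_compose2[OF lipschitz_on_continuous_on[OF G]
        history_dependent_continuous[OF P that]] by simp
  fix J assume J: "compact J" "J \<subseteq> I"
  obtain LP where LP: "LP > 0" "\<And>w1 w2 t. continuous_on I w1 \<Longrightarrow> continuous_on I w2 \<Longrightarrow> t \<in> J \<Longrightarrow>
      norm (P w1 t - P w2 t) \<le> LP * integral {0..t} (\<lambda>s. norm (w1 s - w2 s))"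
    using history_dependentD[OF P J] by blast
  have L: "L \<ge> 0" using G by (rule lipschitz_on_nonneg)
  have "norm (G (P w1 t) - G (P w2 t)) \<le> (L * LP) * integral {0..t} (\<lambda>s. norm (w1 s - w2 s))"
    if "continuous_on I w1" "continuous_on I w2" "t \<in> J" for w1 w2 t
  proof -
    have "norm (G (P w1 t) - G (P w2 t)) \<le> L * norm (P w1 t - P w2 t)"
      using lipschitz_onD[OF G, of "P w1 t" "P w2 t"] by (simp add: dist_norm)
    also have "\<dots> \<le> L * (LP * integral {0..t} (\<lambda>s. norm (w1 s - w2 s)))"
      using LP(2)[OF that] L by (rule mult_left_mono)
    finally show ?thesis by (simp add: mult.assoc)
  qed
  with L LP(1) show "\<exists>L'\<ge>0. \<forall>w1 w2 t. continuous_on I w1 \<longrightarrow> continuous_on I w2 \<longrightarrow> t \<in> J \<longrightarrow>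
      norm (G (P w1 t) - G (P w2 t)) \<le> L' * integral {0..t} (\<lambda>s. norm (w1 s - w2 s))"
    by (intro exI[of _ "L * LP"]) auto
qed

lemma history_dependent_primitive:
  assumes I: "time_interval I"
  shows "history_dependent I (\<lambda>w t. u0 + vintegral {0..t} w)"
proof (rule history_dependentI)
  show "continuous_on I (\<lambda>t. u0 + vintegral {0..t} w)" if "continuous_on I w" for w
    using has_vector_derivative_vintegral_time_interval[OF I that]
    by (intro continuous_intros)
      (meson continuous_on_eq_continuous_within has_vector_derivative_continuous)
  fix J assume "J \<subseteq> I"
  have "norm ((u0 + vintegral {0..t} w1) - (u0 + vintegral {0..t} w2))
      \<le> 1 * integral {0..t} (\<lambda>s. norm (w1 s - w2 s))"
    if "continuous_on I w1" "continuous_on I w2" "t \<in> J" for w1 w2 t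
    using that \<open>J \<subseteq> I\<close> time_interval_subset[OF I]
    by (auto intro!: norm_vintegral_diff_le intro: continuous_on_subset)
  then show "\<exists>L\<ge>0. \<forall>w1 w2 t. continuous_on I w1 \<longrightarrow> continuous_on I w2 \<longrightarrow> t \<in> J \<longrightarrow>
      norm ((u0 + vintegral {0..t} w1) - (u0 + vintegral {0..t} w2))
        \<le> L * integral {0..t} (\<lambda>s. norm (w1 s - w2 s))"
    by (intro exI[of _ 1]) auto
qed

section \<open>Fixed points of history-dependent operators\<close>

lemma integral_exp_le:
  fixes \<beta> s :: real
  assumes "\<beta> > 0" "0 \<le> s"
  shows "integral {0..s} (\<lambda>r. exp (\<beta> * r)) \<le> exp (\<beta> * s) / \<beta>"
proof -
  have "((\<lambda>r. exp (\<beta> * r)) has_integral (exp (\<beta> * s) / \<beta> - exp (\<beta> * 0) / \<beta>)) {0..s}"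
  proof (rule fundamental_theorem_of_calculus[OF assms(2)])
    fix x :: real
    have "((\<lambda>r. exp (\<beta> * r) / \<beta>) has_real_derivative exp (\<beta> * x)) (at x within {0..s})"
      using assms(1) by (auto intro!: derivative_eq_intros)
    then show "((\<lambda>r. exp (\<beta> * r) / \<beta>) has_vector_derivative exp (\<beta> * x)) (at x within {0..s})"
      by (simp add: has_real_derivative_iff_has_vector_derivative)
  qed
  then show ?thesis
    using assms(1) by (simp add: integral_unique)
qed

text \<open>A function on \<open>[0, T]\<close> is extended constantly outside \<open>[0, T]\<close> and damped by
  \<open>exp (- \<beta> t)\<close>; sup-norm distances of such functions are Bielecki distances, and
  \<open>unweight\<close> undoes the embedding on \<open>[0, T]\<close>.\<close>

definition weighted_clamp :: "real \<Rightarrow> real \<Rightarrow> (real \<Rightarrow> 'a::real_normed_vector) \<Rightarrow> real \<Rightarrow>\<^sub>C 'a" where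
  "weighted_clamp \<beta> T h = Bcontfun (\<lambda>x. exp (- \<beta> * clamp 0 T x) *\<^sub>R h (clamp 0 T x))"

definition unweight :: "real \<Rightarrow> (real \<Rightarrow>\<^sub>C 'a::real_normed_vector) \<Rightarrow> real \<Rightarrow> 'a" where
  "unweight \<beta> F t = exp (\<beta> * t) *\<^sub>R F t"

lemma clamp_in_atLeastAtMost:
  fixes T x :: real
  assumes "0 \<le> T"
  shows "clamp 0 T x \<in> {0..T}"
proof -
  have "clamp 0 T x \<in> cbox 0 T"
    by (rule clamp_in_interval) (simp add: assms)
  then show ?thesis by (simp add: cbox_interval)
qed

lemma weighted_clamp_apply:
  assumes "continuous_on {0..T} h"
  shows "weighted_clamp \<beta> T h x = exp (- \<beta> * clamp 0 T x) *\<^sub>R h (clamp 0 T x)"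
proof -
  have "continuous_on (cbox 0 T) (\<lambda>t. exp (- \<beta> * t) *\<^sub>R h t)"
    unfolding cbox_interval using assms by (intro continuous_intros)
  then obtain G :: "real \<Rightarrow>\<^sub>C 'a"
    where "\<And>x. x \<in> cbox 0 T \<Longrightarrow> G x = exp (- \<beta> * x) *\<^sub>R h x"
      and G: "\<And>x. G x = exp (- \<beta> * clamp 0 T x) *\<^sub>R h (clamp 0 T x)"
    by (rule continuous_on_cbox_bcontfunE) blast
  then have "(\<lambda>x. exp (- \<beta> * clamp 0 T x) *\<^sub>R h (clamp 0 T x)) = apply_bcontfun G"
    by auto
  then have "weighted_clamp \<beta> T h = G"
    by (simp add: weighted_clamp_def apply_bcontfun_inverse)
  with G show ?thesis by simp
qed

lemma weighted_clamp_cong: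
  assumes "0 \<le> T" "\<And>t. t \<in> {0..T} \<Longrightarrow> h1 t = h2 t"
  shows "weighted_clamp \<beta> T h1 = weighted_clamp \<beta> T h2"
proof -
  have "h1 (clamp 0 T x) = h2 (clamp 0 T x)" for x
    using assms clamp_in_atLeastAtMost by blast
  then show ?thesis by (simp add: weighted_clamp_def)
qed

lemma unweight_weighted_clamp:
  assumes "continuous_on {0..T} h" "t \<in> {0..T}"
  shows "unweight \<beta> (weighted_clamp \<beta> T h) t = h t"
  using assms by (simp add: unweight_def weighted_clamp_apply cbox_interval flip: exp_add)

lemma continuous_on_unweight: "continuous_on S (unweight \<beta> F)"
  unfolding unweight_def by (auto intro!: continuous_intros)

lemma dist_weighted_clamp_le:
  fixes F G :: "real \<Rightarrow>\<^sub>C 'a::real_normed_vector"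
  assumes \<beta>: "\<beta> > 0" and T: "0 \<le> T" and M: "0 \<le> M"
    and h: "continuous_on {0..T} h1" "continuous_on {0..T} h2"
    and est: "\<And>t. t \<in> {0..T} \<Longrightarrow>
      norm (h1 t - h2 t) \<le> M * integral {0..t} (\<lambda>r. norm (unweight \<beta> F r - unweight \<beta> G r))"
  shows "dist (weighted_clamp \<beta> T h1) (weighted_clamp \<beta> T h2) \<le> M / \<beta> * dist F G"
proof (rule dist_bound)
  fix x
  define s where "s = clamp 0 T x"
  have s: "s \<in> {0..T}"
    unfolding s_def using T by (rule clamp_in_atLeastAtMost)
  have "integral {0..s} (\<lambda>r. norm (unweight \<beta> F r - unweight \<beta> G r))
      \<le> integral {0..s} (\<lambda>r. exp (\<beta> * r) * dist F G)"
  proof (rule integral_le)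
    show "(\<lambda>r. norm (unweight \<beta> F r - unweight \<beta> G r)) integrable_on {0..s}"
      by (intro integrable_continuous_interval continuous_intros continuous_on_unweight)
    show "(\<lambda>r. exp (\<beta> * r) * dist F G) integrable_on {0..s}"
      by (intro integrable_continuous_interval continuous_intros)
    show "norm (unweight \<beta> F r - unweight \<beta> G r) \<le> exp (\<beta> * r) * dist F G" for r
      using dist_bounded[of F r G] by (simp add: unweight_def dist_norm flip: scaleR_diff_right)
  qed
  also have "\<dots> \<le> exp (\<beta> * s) / \<beta> * dist F G"
    using mult_right_mono[OF integral_exp_le[OF \<beta>, of s] zero_le_dist[of F G]] s
    by (simp add: integral_mult_left)
  finally have "norm (h1 s - h2 s) \<le> M * (exp (\<beta> * s) / \<beta> * dist F G)"
    using est[OF s] M by (meson mult_left_mono order.trans)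
  then have "exp (- \<beta> * s) * norm (h1 s - h2 s) \<le> M / \<beta> * dist F G"
    by (simp add: exp_minus field_simps)
  then show "dist (weighted_clamp \<beta> T h1 x) (weighted_clamp \<beta> T h2 x) \<le> M / \<beta> * dist F G"
    by (simp add: weighted_clamp_apply[OF h(1)] weighted_clamp_apply[OF h(2)] dist_norm
        s_def flip: scaleR_diff_right)
qed

lemma history_dependent_bielecki_contraction:
  fixes \<Lambda> :: "(real \<Rightarrow> 'a::real_normed_vector) \<Rightarrow> real \<Rightarrow> 'a"
  assumes \<Lambda>: "history_dependent I \<Lambda>" and T: "0 \<le> T" "{0..T} \<subseteq> I"
  obtains \<beta> where "\<And>F G. dist (weighted_clamp \<beta> T (\<Lambda> (unweight \<beta> F)))
    (weighted_clamp \<beta> T (\<Lambda> (unweight \<beta> G))) \<le> 1/2 * dist F G"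
proof -
  obtain M where M: "M > 0" and est: "\<And>w1 w2 t. continuous_on I w1 \<Longrightarrow> continuous_on I w2 \<Longrightarrow>
      t \<in> {0..T} \<Longrightarrow> norm (\<Lambda> w1 t - \<Lambda> w2 t) \<le> M * integral {0..t} (\<lambda>s. norm (w1 s - w2 s))"
    using history_dependentD[OF \<Lambda> compact_Icc T(2)] by blast
  have \<Lambda>_cont: "continuous_on {0..T} (\<Lambda> (unweight \<beta> F))" for \<beta> F
    using history_dependent_continuous[OF \<Lambda> continuous_on_unweight] T(2)
    by (rule continuous_on_subset)
  have "dist (weighted_clamp (2 * M) T (\<Lambda> (unweight (2 * M) F)))
      (weighted_clamp (2 * M) T (\<Lambda> (unweight (2 * M) G))) \<le> M / (2 * M) * dist F G" for F G
    using M by (intro dist_weighted_clamp_le \<Lambda>_cont T(1) est continuous_on_unweight) simp_all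
  with M show ?thesis
    by (intro that[of "2 * M"]) simp
qed

lemma history_dependent_fixpoint_on:
  fixes \<Lambda> :: "(real \<Rightarrow> 'a::{real_normed_vector,complete_space}) \<Rightarrow> real \<Rightarrow> 'a"
  assumes \<Lambda>: "history_dependent I \<Lambda>" and T: "0 \<le> T" "{0..T} \<subseteq> I"
  obtains w where "continuous_on I w" "\<forall>t\<in>{0..T}. \<Lambda> w t = w t"
    "\<And>w'. continuous_on I w' \<Longrightarrow> \<forall>t\<in>{0..T}. \<Lambda> w' t = w' t \<Longrightarrow> \<forall>t\<in>{0..T}. w' t = w t"
proof -
  obtain \<beta> where contraction: "\<And>F G. dist (weighted_clamp \<beta> T (\<Lambda> (unweight \<beta> F)))
      (weighted_clamp \<beta> T (\<Lambda> (unweight \<beta> G))) \<le> 1/2 * dist F G"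
    using history_dependent_bielecki_contraction[OF \<Lambda> T] by blast
  define \<Phi> where "\<Phi> F = weighted_clamp \<beta> T (\<Lambda> (unweight \<beta> F))" for F
  have "\<exists>!F. \<Phi> F = F"
    using contraction by (intro banach_fix_type[of "1/2"]) (auto simp: \<Phi>_def)
  then obtain F where F: "\<Phi> F = F" and F_unique: "\<And>G. \<Phi> G = G \<Longrightarrow> G = F"
    by blast
  show ?thesis
  proof (rule that[of "unweight \<beta> F"])
    show "continuous_on I (unweight \<beta> F)"
      by (rule continuous_on_unweight)
    have \<Lambda>_cont: "continuous_on {0..T} (\<Lambda> (unweight \<beta> F))"
      using history_dependent_continuous[OF \<Lambda> continuous_on_unweight] T(2)
      by (rule continuous_on_subset)
    show "\<forall>t\<in>{0..T}. \<Lambda> (unweight \<beta> F) t = unweight \<beta> F t"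
      using unweight_weighted_clamp[OF \<Lambda>_cont, of _ \<beta>] F by (simp add: \<Phi>_def)
  next
    fix w' assume w': "continuous_on I w'" "\<forall>t\<in>{0..T}. \<Lambda> w' t = w' t"
    have w'_cont: "continuous_on {0..T} w'"
      using w'(1) T(2) by (rule continuous_on_subset)
    have "\<Lambda> (unweight \<beta> (weighted_clamp \<beta> T w')) t = w' t" if t: "t \<in> {0..T}" for t
    proof -
      have "\<Lambda> (unweight \<beta> (weighted_clamp \<beta> T w')) t = \<Lambda> w' t"
        using t T(2) unweight_weighted_clamp[OF w'_cont]
        by (intro history_dependent_causal[OF \<Lambda> continuous_on_unweight w'(1)]) auto
      with w'(2) t show ?thesis by simp
    qed
    then have "\<Phi> (weighted_clamp \<beta> T w') = weighted_clamp \<beta> T w'"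
      unfolding \<Phi>_def using T(1) by (intro weighted_clamp_cong)
    then have "weighted_clamp \<beta> T w' = F"
      by (rule F_unique)
    then show "\<forall>t\<in>{0..T}. w' t = unweight \<beta> F t"
      using unweight_weighted_clamp[OF w'_cont, of _ \<beta>] by simp
  qed
qed

lemma history_dependent_fixpoint_unique_on:
  fixes \<Lambda> :: "(real \<Rightarrow> 'a::{real_normed_vector,complete_space}) \<Rightarrow> real \<Rightarrow> 'a"
  assumes "history_dependent I \<Lambda>" "0 \<le> T" "{0..T} \<subseteq> I"
    and "continuous_on I w1" "\<forall>t\<in>{0..T}. \<Lambda> w1 t = w1 t"
    and "continuous_on I w2" "\<forall>t\<in>{0..T}. \<Lambda> w2 t = w2 t"
  shows "\<forall>t\<in>{0..T}. w1 t = w2 t"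
proof -
  obtain w where
    "\<And>w'. continuous_on I w' \<Longrightarrow> \<forall>t\<in>{0..T}. \<Lambda> w' t = w' t \<Longrightarrow> \<forall>t\<in>{0..T}. w' t = w t"
    using history_dependent_fixpoint_on[OF assms(1-3)] by metis
  with assms(4-7) show ?thesis by metis
qed

lemma continuous_on_atLeast:
  fixes f :: "real \<Rightarrow> 'a::topological_space"
  assumes "\<And>b. continuous_on {a..b} f"
  shows "continuous_on {a..} f"
  unfolding continuous_on_eq_continuous_within
proof
  fix t assume t: "t \<in> {a..}"
  have "at t within {a..} = at t within {a..t + 1}"
    by (rule at_within_nhd[of _ "{..<t + 1}"]) auto
  then show "continuous (at t within {a..}) f"
    using assms[of "t + 1"] t by (simp add: continuous_on_eq_continuous_within)
qed

lemma history_dependent_fixpoint_atLeast: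
  fixes \<Lambda> :: "(real \<Rightarrow> 'a::{real_normed_vector,complete_space}) \<Rightarrow> real \<Rightarrow> 'a"
  assumes \<Lambda>: "history_dependent {0..} \<Lambda>"
  obtains w where "continuous_on {0..} w" "\<And>t. t \<in> {0..} \<Longrightarrow> \<Lambda> w t = w t"
proof -
  have "\<forall>n. \<exists>w. continuous_on {0..} w \<and> (\<forall>t\<in>{0..real n}. \<Lambda> w t = w t)"
  proof
    fix n :: nat
    have "{0..real n} \<subseteq> {0..}" by auto
    then show "\<exists>w. continuous_on {0..} w \<and> (\<forall>t\<in>{0..real n}. \<Lambda> w t = w t)"
      by (metis history_dependent_fixpoint_on[OF \<Lambda>] of_nat_0_le_iff)
  qed
  then obtain W where "\<forall>n. continuous_on {0..} (W n) \<and> (\<forall>t\<in>{0..real n}. \<Lambda> (W n) t = W n t)"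
    by (metis choice)
  then have W: "\<And>n. continuous_on {0..} (W n)" "\<And>n. \<forall>t\<in>{0..real n}. \<Lambda> (W n) t = W n t"
    by auto
  define w where "w t = W (nat \<lceil>t\<rceil>) t" for t
  have agree: "w t = W n t" if t: "t \<in> {0..real n}" for t n
  proof -
    define m where "m = nat \<lceil>t\<rceil>"
    have m: "t \<in> {0..real m}" "m \<le> n"
      using t real_nat_ceiling_ge[of t] by (auto simp: m_def)
    then have "\<forall>s\<in>{0..real m}. W m s = W n s"
      using W(2)[of n] by (intro history_dependent_fixpoint_unique_on[OF \<Lambda> _ _ W(1) W(2) W(1)]) auto
    then show ?thesis
      using m(1) by (simp add: w_def m_def)
  qed
  have w_cont: "continuous_on {0..} w"
  proof (rule continuous_on_atLeast)
    fix b
    have "continuous_on {0..b} (W (nat \<lceil>b\<rceil>))"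
      by (rule continuous_on_subset[OF W(1)]) auto
    moreover have "W (nat \<lceil>b\<rceil>) x = w x" if "x \<in> {0..b}" for x
    proof -
      have "x \<in> {0..real (nat \<lceil>b\<rceil>)}"
        using that real_nat_ceiling_ge[of b] unfolding atLeastAtMost_iff by linarith
      then show ?thesis by (rule agree[symmetric])
    qed
    ultimately show "continuous_on {0..b} w"
      by (rule continuous_on_eq)
  qed
  moreover have "\<Lambda> w t = w t" if t: "t \<in> {0..}" for t
  proof -
    define n where "n = nat \<lceil>t\<rceil>"
    have tn: "t \<in> {0..real n}"
      using t real_nat_ceiling_ge[of t] by (simp add: n_def)
    have "\<Lambda> w t = \<Lambda> (W n) t"
      using tn by (intro history_dependent_causal[OF \<Lambda> w_cont W(1) t] agree) auto
    also have "\<dots> = w t"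
      using W(2)[of n] tn agree[OF tn] by simp
    finally show ?thesis .
  qed
  ultimately show thesis by (rule that)
qed

lemma history_dependent_fixpoint:
  fixes \<Lambda> :: "(real \<Rightarrow> 'a::{real_normed_vector,complete_space}) \<Rightarrow> real \<Rightarrow> 'a"
  assumes I: "time_interval I" and \<Lambda>: "history_dependent I \<Lambda>"
  obtains w where "continuous_on I w" "\<And>t. t \<in> I \<Longrightarrow> \<Lambda> w t = w t"
  using I unfolding time_interval_def
proof (elim disjE exE conjE)
  fix T assume T: "0 \<le> T" "I = {0..T}"
  then obtain w where "continuous_on I w" "\<forall>t\<in>{0..T}. \<Lambda> w t = w t"
    by (metis history_dependent_fixpoint_on[OF \<Lambda>] order_refl)
  with T(2) show thesis
    by (intro that) auto
next
  assume "I = {0..}"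
  with \<Lambda> history_dependent_fixpoint_atLeast that show thesis by blast
qed

lemma history_dependent_fixpoint_unique:
  fixes \<Lambda> :: "(real \<Rightarrow> 'a::{real_normed_vector,complete_space}) \<Rightarrow> real \<Rightarrow> 'a"
  assumes I: "time_interval I" and \<Lambda>: "history_dependent I \<Lambda>"
    and w1: "continuous_on I w1" "\<And>t. t \<in> I \<Longrightarrow> \<Lambda> w1 t = w1 t"
    and w2: "continuous_on I w2" "\<And>t. t \<in> I \<Longrightarrow> \<Lambda> w2 t = w2 t"
    and t: "t \<in> I"
  shows "w1 t = w2 t"
proof -
  have "\<forall>s\<in>{0..t}. w1 s = w2 s"
    using time_interval_subset[OF I t] w1(2) w2(2)
    by (intro history_dependent_fixpoint_unique_on[OF \<Lambda> time_interval_nonneg[OF I t]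
        time_interval_subset[OF I t] w1(1) _ w2(1)]) auto
  then show ?thesis
    using time_interval_nonneg[OF I t] by simp
qed

section \<open>The solution operator of the variational inequality\<close>

locale elliptic_vi =
  fixes K :: "'x::{real_inner,complete_space} set"
    and A :: "'x \<Rightarrow> 'x" and mA LA :: real
    and j :: "'y::real_normed_vector \<Rightarrow> 'x \<Rightarrow> real" and \<alpha>j :: real
  assumes K: "K \<noteq> {}" "closed K" "convex K" "cone K"
    and A: "mA > 0" "LA > 0"
      "\<And>u v. inner (A u - A v) (u - v) \<ge> mA * (norm (u - v))\<^sup>2"
      "\<And>u v. norm (A u - A v) \<le> LA * norm (u - v)"
    and j_convex: "\<And>\<eta>. convex_on K (j \<eta>)"
    and j_hom: "\<And>\<eta> c v. c > 0 \<Longrightarrow> v \<in> K \<Longrightarrow> j \<eta> (c *\<^sub>R v) = c * j \<eta> v"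
    and j_lip: "\<And>\<eta>. \<exists>L. L-lipschitz_on K (j \<eta>)"
    and j_alpha: "\<alpha>j \<ge> 0"
      "\<And>\<eta>1 \<eta>2 v1 v2. v1 \<in> K \<Longrightarrow> v2 \<in> K \<Longrightarrow>
         j \<eta>1 v2 - j \<eta>1 v1 + j \<eta>2 v1 - j \<eta>2 v2 \<le> \<alpha>j * norm (\<eta>1 - \<eta>2) * norm (v1 - v2)"
begin

definition vi_sol :: "'y \<Rightarrow> 'x \<Rightarrow> 'x" where
  "vi_sol \<eta> g = (SOME w. solves_vi K A (j \<eta>) g w)"

lemma solves_vi_sol: "solves_vi K A (j \<eta>) g (vi_sol \<eta> g)"
proof -
  obtain L where "L-lipschitz_on K (j \<eta>)" using j_lip by blast
  then show ?thesis
    unfolding vi_sol_def by (rule someI_ex[OF solves_vi_exists[OF K(1-3) j_convex _ A]])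
qed

lemma vi_sol_estimate:
  "mA * norm (vi_sol \<eta>1 g1 - vi_sol \<eta>2 g2) \<le> norm (g1 - g2) + \<alpha>j * norm (\<eta>1 - \<eta>2)"
  using solves_vi_sol[of \<eta>1 g1] solves_vi_sol[of \<eta>2 g2] j_alpha
  by (intro solves_vi_stability[OF A(1) A(3) solves_vi_sol solves_vi_sol])
    (auto simp: solves_vi_def)

lemma solves_vi_iff_vi_sol: "solves_vi K A (j \<eta>) g w \<longleftrightarrow> w = vi_sol \<eta> g"
proof
  assume sol: "solves_vi K A (j \<eta>) g w"
  have "mA * norm (w - vi_sol \<eta> g) \<le> norm (g - g) + 0"
    by (rule solves_vi_stability[OF A(1) A(3) sol solves_vi_sol]) auto
  then show "w = vi_sol \<eta> g"
    using A(1) by (simp add: mult_le_0_iff)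
qed (simp add: solves_vi_sol)

lemma vi_sol_lipschitz: "((1 + \<alpha>j) / mA)-lipschitz_on UNIV (\<lambda>(\<eta>, g). vi_sol \<eta> g)"
proof (rule lipschitz_onI)
  fix p q :: "'y \<times> 'x"
  have "mA * dist (case p of (\<eta>, g) \<Rightarrow> vi_sol \<eta> g) (case q of (\<eta>, g) \<Rightarrow> vi_sol \<eta> g)
      \<le> dist (snd p) (snd q) + \<alpha>j * dist (fst p) (fst q)"
    using vi_sol_estimate[of "fst p" "snd p" "fst q" "snd q"] by (simp add: dist_norm split_beta)
  also have "\<dots> \<le> (1 + \<alpha>j) * dist p q"
    using dist_fst_le[of p q] dist_snd_le[of p q] j_alpha(1)
    by (simp add: distrib_right mult_left_mono add_mono)
  finally show "dist (case p of (\<eta>, g) \<Rightarrow> vi_sol \<eta> g) (case q of (\<eta>, g) \<Rightarrow> vi_sol \<eta> g)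
      \<le> (1 + \<alpha>j) / mA * dist p q"
    using A(1) by (simp add: field_simps)
qed (use A(1) j_alpha(1) in simp)

lemma normal_cone_iff_vi_sol:
  "- w \<in> normal_cone (Cset_t K j f \<eta> t) (A w + b) \<and> w \<in> K \<longleftrightarrow> w = vi_sol \<eta> (f t - b)"
proof -
  obtain L where L: "L-lipschitz_on K (j \<eta>)" using j_lip by blast
  have "A w + b = f t - (f t - b - A w)" by simp
  then have "- w \<in> normal_cone (Cset_t K j f \<eta> t) (A w + b)
      \<longleftrightarrow> w \<in> normal_cone (Cset K j \<eta>) (f t - b - A w)"
    by (simp only: Cset_t_def normal_cone_reflect)
  moreover have "w \<in> normal_cone (Cset K j \<eta>) (f t - b - A w) \<longleftrightarrow> solves_vi K A (j \<eta>) (f t - b) w"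
    if "w \<in> K"
    using normal_cone_Cset_iff[where j = j and \<eta> = \<eta>, OF K(2-4) that j_convex L j_hom]
    by (simp add: solves_vi_def that inner_diff_left algebra_simps)
  ultimately show ?thesis
    unfolding solves_vi_iff_vi_sol[symmetric] by (auto simp: solves_vi_def)
qed

lemma history_dependent_vi_sol:
  assumes "history_dependent I P" "history_dependent I Q"
  shows "history_dependent I (\<lambda>w t. vi_sol (P w t) (Q w t))"
  using history_dependent_lipschitz_compose[OF vi_sol_lipschitz history_dependent_Pair[OF assms]]
  by simp

end

section \<open>The evolution inclusion\<close>

locale evolution_inclusion = elliptic_vi K A mA LA j \<alpha>j
  for K :: "'x::{real_inner,complete_space} set" and A mA LA
    and j :: "'y::real_normed_vector \<Rightarrow> 'x \<Rightarrow> real" and \<alpha>j +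
  fixes I :: "real set" and f :: "real \<Rightarrow> 'x" and B :: "'x \<Rightarrow> 'x" and u0 :: 'x
    and R :: "(real \<Rightarrow> 'x) \<Rightarrow> real \<Rightarrow> 'y" and S :: "(real \<Rightarrow> 'x) \<Rightarrow> real \<Rightarrow> 'x"
  assumes time_interval_I: "time_interval I" and f_continuous: "continuous_on I f"
    and B_lipschitz: "\<exists>L. L-lipschitz_on UNIV B"
    and R_history_dependent: "history_dependent I R"
    and S_history_dependent: "history_dependent I S"
begin

definition primitive :: "(real \<Rightarrow> 'x) \<Rightarrow> real \<Rightarrow> 'x" where
  "primitive w t = u0 + vintegral {0..t} w"

definition \<Lambda> :: "(real \<Rightarrow> 'x) \<Rightarrow> real \<Rightarrow> 'x" where
  "\<Lambda> w t = vi_sol (R w t) (f t - B (primitive w t) - S w t)"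

lemma history_dependent_\<Lambda>: "history_dependent I \<Lambda>"
proof -
  obtain L where L: "L-lipschitz_on UNIV B"
    using B_lipschitz by blast
  show ?thesis
    unfolding \<Lambda>_def[abs_def] primitive_def
    by (intro history_dependent_vi_sol history_dependent_diff history_dependent_const
        history_dependent_lipschitz_compose[OF L] history_dependent_primitive R_history_dependent
        S_history_dependent f_continuous time_interval_I)
qed

lemma inclusion_iff_fixpoint:
  assumes "v t = primitive v' t"
  shows "v' t \<in> K \<and> - v' t \<in> normal_cone (Cset_t K j f (R v' t) t) (A (v' t) + B (v t) + S v' t)
    \<longleftrightarrow> \<Lambda> v' t = v' t"
  using normal_cone_iff_vi_sol[of "v' t" f "R v' t" t "B (v t) + S v' t"] assms
  by (auto simp: \<Lambda>_def add.assoc diff_diff_eq)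

lemma fixpoint_solves:
  assumes w: "continuous_on I w" "\<And>t. t \<in> I \<Longrightarrow> \<Lambda> w t = w t" and t: "t \<in> I"
  shows "(primitive w has_vector_derivative w t) (at t within I)"
    and "w t \<in> K"
    and "- w t \<in> normal_cone (Cset_t K j f (R w t) t) (A (w t) + B (primitive w t) + S w t)"
proof -
  show "(primitive w has_vector_derivative w t) (at t within I)"
    unfolding primitive_def[abs_def]
    using has_vector_derivative_add[OF has_vector_derivative_const
        has_vector_derivative_vintegral_time_interval[OF time_interval_I w(1) t]]
    by simp
  show "w t \<in> K" "- w t \<in> normal_cone (Cset_t K j f (R w t) t) (A (w t) + B (primitive w t) + S w t)"
    using inclusion_iff_fixpoint[of "primitive w" t w] w(2)[OF t] by auto
qed

lemma primitive_0: "primitive w 0 = u0"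
  by (simp add: primitive_def)

lemma solution_unique:
  assumes v: "\<forall>t\<in>I. (v has_vector_derivative v' t) (at t within I)" "continuous_on I v'"
      "\<forall>t\<in>I. v' t \<in> K"
      "\<forall>t\<in>I. - v' t \<in> normal_cone (Cset_t K j f (R v' t) t) (A (v' t) + B (v t) + S v' t)"
      "v 0 = u0"
    and w: "continuous_on I w" "\<And>t. t \<in> I \<Longrightarrow> \<Lambda> w t = w t" and t: "t \<in> I"
  shows "v t = primitive w t"
proof -
  have v_primitive: "v s = primitive v' s" if "s \<in> I" for s
  proof -
    have "v s = v 0 + vintegral {0..s} v'"
      by (rule time_interval_fundamental[OF time_interval_I that]) (use v(1) in blast)
    with v(5) show ?thesis by (simp add: primitive_def)
  qed
  have "v' s = w s" if "s \<in> I" for s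
    using v v_primitive inclusion_iff_fixpoint
    by (intro history_dependent_fixpoint_unique[OF time_interval_I history_dependent_\<Lambda> v(2) _ w that])
      blast
  then have "primitive v' t = primitive w t"
    unfolding primitive_def using time_interval_subset[OF time_interval_I t]
    by (intro arg_cong[where f = "(+) u0"] vintegral_cong) auto
  with v_primitive[OF t] show ?thesis by simp
qed

end

theorem corollary4p1:
  fixes I :: "real set" and T :: real
    and K :: "'x::{real_inner,complete_space} set"
    and A B :: "'x \<Rightarrow> 'x" and mA LA :: real
    and j :: "'y::{real_inner,complete_space} \<Rightarrow> 'x \<Rightarrow> real" and \<alpha>j :: real
    and f :: "real \<Rightarrow> 'x" and u0 :: 'x
    and R :: "(real \<Rightarrow> 'x) \<Rightarrow> (real \<Rightarrow> 'y)"
    and S :: "(real \<Rightarrow> 'x) \<Rightarrow> (real \<Rightarrow> 'x)"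
  assumes I: "(T > 0 \<and> I = {0..T}) \<or> I = {0..}"
    and K: "K \<noteq> {}" "closed K" "convex K" "cone K"
    and A: "mA > 0" "LA > 0"
      "\<And>u v. inner (A u - A v) (u - v) \<ge> mA * (norm (u - v))\<^sup>2"
      "\<And>u v. norm (A u - A v) \<le> LA * norm (u - v)"
    and j_convex: "\<And>\<eta>. convex_on K (j \<eta>)"
    and j_hom: "\<And>\<eta> c v. c > 0 \<Longrightarrow> v \<in> K \<Longrightarrow> j \<eta> (c *\<^sub>R v) = c * j \<eta> v"
    and j_lip: "\<And>\<eta>. \<exists>L. L-lipschitz_on K (j \<eta>)"
    and j_alpha: "\<alpha>j \<ge> 0"
      "\<And>\<eta>1 \<eta>2 v1 v2. v1 \<in> K \<Longrightarrow> v2 \<in> K \<Longrightarrow>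
         j \<eta>1 v2 - j \<eta>1 v1 + j \<eta>2 v1 - j \<eta>2 v2 \<le> \<alpha>j * norm (\<eta>1 - \<eta>2) * norm (v1 - v2)"
    and f: "continuous_on I f"
    and B: "\<exists>L. L-lipschitz_on UNIV B"
    and R: "history_dependent I R"
    and S: "history_dependent I S"
  shows "\<exists>u u'. (\<forall>t\<in>I. (u has_vector_derivative u' t) (at t within I)) \<and>
           continuous_on I u' \<and> (\<forall>t\<in>I. u' t \<in> K) \<and>
           (\<forall>t\<in>I. - u' t \<in> normal_cone (Cset_t K j f (R u' t) t) (A (u' t) + B (u t) + S u' t)) \<and>
           u 0 = u0 \<and>
           (\<forall>v v'. (\<forall>t\<in>I. (v has_vector_derivative v' t) (at t within I)) \<and>
              continuous_on I v' \<and> (\<forall>t\<in>I. v' t \<in> K) \<and>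
              (\<forall>t\<in>I. - v' t \<in> normal_cone (Cset_t K j f (R v' t) t) (A (v' t) + B (v t) + S v' t)) \<and>
              v 0 = u0 \<longrightarrow> (\<forall>t\<in>I. v t = u t))"
proof -
  interpret evolution_inclusion K A mA LA j \<alpha>j I f B u0 R S
    using K A j_convex j_hom j_lip j_alpha I f B R S
    by unfold_locales (auto simp: time_interval_def)
  obtain w where w: "continuous_on I w" "\<And>t. t \<in> I \<Longrightarrow> \<Lambda> w t = w t"
    using history_dependent_fixpoint[OF time_interval_I history_dependent_\<Lambda>] by blast
  show ?thesis
  proof (rule exI[of _ "primitive w"], rule exI[of _ w], intro conjI allI impI ballI)
    show "v t = primitive w t"
      if "(\<forall>t\<in>I. (v has_vector_derivative v' t) (at t within I)) \<and> continuous_on I v' \<and>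
        (\<forall>t\<in>I. v' t \<in> K) \<and>
        (\<forall>t\<in>I. - v' t \<in> normal_cone (Cset_t K j f (R v' t) t) (A (v' t) + B (v t) + S v' t)) \<and>
        v 0 = u0" and "t \<in> I" for v v' t
      using that solution_unique[OF _ _ _ _ _ w] by blast
  qed (use w fixpoint_solves[OF w] primitive_0 in auto)
qed

end
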